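(* Let $N\ge1$ and $\eta\in[0,1]$. For bit strings $l_y\in\{0,1\}^N$ with $l_y^1=0$, $y=1,\dots,2^{N-1}$, consider the quantum functional $$(\mathcal B_N)_Q=\eta\sum_{y=1}^{2^{N-1}}\Big|\sum_{x=1}^N(-1)^{l_y^x}\,\mathrm{Tr}\big[\rho_{AB}\,(A_x\otimes B_y)\big]\Big|,$$ where $\rho_{AB}$ is a density operator on $\mathcal H_A\otimes\mathcal H_B$ (finite-dimensional Hilbert spaces of arbitrary dimension) and $A_x$, $B_y$ are self-adjoint operators with $A_x^2=\mathbb I$, $B_y^2=\mathbb I$. Then the supremum of $(\mathcal B_N)_Q$ over all such states and observables equals $\eta\,2^{N-1}\sqrt N$, and this value is attained when $A_1,\dots,A_N$ pairwise anticommute, i.e. $A_xA_{x'}+A_{x'}A_x=2\delta_{x,x'}\mathbb I$.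
   Context: Alice's unsharp measurements are the POVMs $\{E_{\pm|x}=\tfrac12(\mathbb I\pm\eta A_x)\}$, so that the effective observable is $\eta A_x$; $\eta$ is the unsharpness parameter. *)

theory Defs
  imports Complex_Main "Jordan_Normal_Form.Matrix"
begin

definition mtrace :: "complex mat \<Rightarrow> complex" where
  "mtrace M = (\<Sum>i<dim_row M. M $$ (i, i))"

definition kron :: "complex mat \<Rightarrow> complex mat \<Rightarrow> complex mat" where
  "kron M K = mat (dim_row M * dim_row K) (dim_col M * dim_col K)
     (\<lambda>(i, j). M $$ (i div dim_row K, j div dim_col K) * K $$ (i mod dim_row K, j mod dim_col K))"

definition hermitian_mat :: "nat \<Rightarrow> complex mat \<Rightarrow> bool" where
  "hermitian_mat d M \<longleftrightarrow> M \<in> carrier_mat d d \<and>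
     (\<forall>i<d. \<forall>j<d. M $$ (i, j) = cnj (M $$ (j, i)))"

definition psd_mat :: "nat \<Rightarrow> complex mat \<Rightarrow> bool" where
  "psd_mat d M \<longleftrightarrow> hermitian_mat d M \<and>
     (\<forall>v \<in> carrier_vec d. 0 \<le> Re (\<Sum>i<d. \<Sum>j<d. cnj (v $ i) * M $$ (i, j) * v $ j))"

definition density_mat :: "nat \<Rightarrow> complex mat \<Rightarrow> bool" where
  "density_mat d \<rho> \<longleftrightarrow> psd_mat d \<rho> \<and> mtrace \<rho> = 1"

definition observable :: "nat \<Rightarrow> complex mat \<Rightarrow> bool" where
  "observable d M \<longleftrightarrow> hermitian_mat d M \<and> M * M = 1\<^sub>m d"

(* Alice's settings x = 1..N are indexed by x \<in> {0..<N}.  Bob's settings y are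
   indexed by the bit strings l_y themselves: a string l \<in> {0,1}^N with l^1 = 0
   is represented by the set S \<subseteq> {1..<N} of positions carrying bit 1. *)
definition bob_strings :: "nat \<Rightarrow> nat set set" where
  "bob_strings N = Pow {1..<N}"

definition valid_setup :: "nat \<Rightarrow> nat \<Rightarrow> nat \<Rightarrow> complex mat \<Rightarrow> (nat \<Rightarrow> complex mat)
     \<Rightarrow> (nat set \<Rightarrow> complex mat) \<Rightarrow> bool" where
  "valid_setup N dA dB \<rho> A B \<longleftrightarrow>
     density_mat (dA * dB) \<rho> \<and> (\<forall>x<N. observable dA (A x)) \<and>
     (\<forall>S \<in> bob_strings N. observable dB (B S))"

definition BN_Q :: "nat \<Rightarrow> real \<Rightarrow> complex mat \<Rightarrow> (nat \<Rightarrow> complex mat)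
     \<Rightarrow> (nat set \<Rightarrow> complex mat) \<Rightarrow> real" where
  "BN_Q N \<eta> \<rho> A B = \<eta> * (\<Sum>S \<in> bob_strings N.
      cmod (\<Sum>x<N. (if x \<in> S then -1 else 1) * mtrace (\<rho> * kron (A x) (B S))))"

end

theory Submission
  imports Defs
begin

text \<open>
  For a bit string \<open>S\<close> put \<open>X\<^sub>S = \<Sum>\<^sub>x (-1)\<^bsup>S\<^sub>x\<^esup> A\<^sub>x\<close>; the \<open>S\<close>-th correlation is \<open>tr(\<rho> (X\<^sub>S \<otimes> B\<^sub>S))\<close>.
  Since \<open>X\<^sub>S \<otimes> 1\<close> and \<open>1 \<otimes> B\<^sub>S\<close> commute and \<open>B\<^sub>S\<^sup>2 = 1\<close>, expanding
  \<open>0 \<le> tr(\<rho> (X\<^sub>S \<otimes> 1 \<plusminus> \<surd>N (1 \<otimes> B\<^sub>S))\<^sup>2)\<close> gives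
  \<open>2 \<surd>N |tr(\<rho> (X\<^sub>S \<otimes> B\<^sub>S))| \<le> tr(\<rho> (X\<^sub>S\<^sup>2 \<otimes> 1)) + N\<close>.  Summing over \<open>S\<close>, the orthogonality of the
  sign characters \<open>S \<mapsto> (-1)\<^bsup>S\<^sub>x\<^esup>\<close> and \<open>A\<^sub>x\<^sup>2 = 1\<close> give \<open>\<Sum>\<^sub>S X\<^sub>S\<^sup>2 = 2\<^bsup>N-1\<^esup> N\<close>, hence the bound
  \<open>2\<^bsup>N-1\<^esup> \<surd>N\<close>.  It is attained with \<open>N\<close> anticommuting real symmetric Jordan--Wigner matrices
  \<open>A\<^sub>x\<close> (so that \<open>X\<^sub>S\<^sup>2 = N\<close>), \<open>B\<^sub>S = X\<^sub>S / \<surd>N\<close> and the maximally entangled state, for which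
  \<open>tr(\<rho> (X \<otimes> Y)) = tr(X\<^sup>T Y) / d\<close>.
\<close>

section \<open>Kronecker products\<close>

lemma div_mod_less_of_less_mult:
  assumes "(i::nat) < n * m"
  shows "i div m < n" and "i mod m < m"
proof -
  from assms have "m > 0" by (cases m) auto
  with assms show "i div m < n" "i mod m < m" by (simp_all add: less_mult_imp_div_less)
qed

lemma sum_lessThan_mult_div_mod:
  fixes f :: "nat \<Rightarrow> nat \<Rightarrow> 'a::comm_monoid_add"
  shows "(\<Sum>k<n * m. f (k div m) (k mod m)) = (\<Sum>a<n. \<Sum>b<m. f a b)"
proof -
  have "(\<Sum>k\<in>{a * m..<a * m + m}. f (k div m) (k mod m)) = (\<Sum>b<m. f a b)" for a
    using sum.shift_bounds_nat_ivl[of "\<lambda>k. f (k div m) (k mod m)" 0 "a * m" m]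
    by (simp add: atLeast0LessThan add.commute)
  then show ?thesis
    using sum.nat_group[of "\<lambda>k. f (k div m) (k mod m)" m n] by (simp add: mult.commute)
qed

lemma dim_kron [simp]:
  "dim_row (kron M K) = dim_row M * dim_row K"
  "dim_col (kron M K) = dim_col M * dim_col K"
  by (simp_all add: kron_def)

lemma index_kron [simp]:
  "i < dim_row M * dim_row K \<Longrightarrow> j < dim_col M * dim_col K \<Longrightarrow>
   kron M K $$ (i, j) = M $$ (i div dim_row K, j div dim_col K) * K $$ (i mod dim_row K, j mod dim_col K)"
  by (simp add: kron_def)

lemma kron_carrier_mat:
  "M \<in> carrier_mat n n \<Longrightarrow> K \<in> carrier_mat m m \<Longrightarrow> kron M K \<in> carrier_mat (n * m) (n * m)"
  by (rule carrier_matI) (auto dest: carrier_matD)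

lemma kron_mult:
  assumes AC: "dim_col A = dim_row C" and BD: "dim_col B = dim_row D"
  shows "kron A B * kron C D = kron (A * C) (B * D)"
proof (rule eq_matI)
  let ?r = "dim_row B" and ?n = "dim_col A" and ?m = "dim_col B" and ?c = "dim_col D"
  fix i j assume "i < dim_row (kron (A * C) (B * D))" "j < dim_col (kron (A * C) (B * D))"
  then have i: "i < dim_row A * ?r" and j: "j < dim_col C * ?c" by auto
  have "(kron A B * kron C D) $$ (i, j) = (\<Sum>k<?n * ?m. kron A B $$ (i, k) * kron C D $$ (k, j))"
    using AC BD i j by (simp add: scalar_prod_def atLeast0LessThan)
  also have "\<dots> = (\<Sum>k<?n * ?m. (A $$ (i div ?r, k div ?m) * B $$ (i mod ?r, k mod ?m)) *
                                (C $$ (k div ?m, j div ?c) * D $$ (k mod ?m, j mod ?c)))"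
    using AC BD i j by (intro sum.cong) auto
  also have "\<dots> = (\<Sum>a<?n. \<Sum>b<?m. (A $$ (i div ?r, a) * B $$ (i mod ?r, b)) *
                                  (C $$ (a, j div ?c) * D $$ (b, j mod ?c)))"
    by (rule sum_lessThan_mult_div_mod)
  also have "\<dots> = (\<Sum>a<?n. A $$ (i div ?r, a) * C $$ (a, j div ?c)) *
                  (\<Sum>b<?m. B $$ (i mod ?r, b) * D $$ (b, j mod ?c))"
    unfolding sum_product by (intro sum.cong refl) (simp add: mult_ac)
  also have "\<dots> = kron (A * C) (B * D) $$ (i, j)"
    using AC BD i j div_mod_less_of_less_mult[OF i] div_mod_less_of_less_mult[OF j]
    by (simp add: scalar_prod_def atLeast0LessThan)
  finally show "(kron A B * kron C D) $$ (i, j) = kron (A * C) (B * D) $$ (i, j)" .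
qed auto

lemma kron_one: "kron (1\<^sub>m n) (1\<^sub>m m) = 1\<^sub>m (n * m)"
proof (rule eq_matI)
  fix i j assume "i < dim_row (1\<^sub>m (n * m) :: complex mat)" "j < dim_col (1\<^sub>m (n * m) :: complex mat)"
  then have i: "i < n * m" and j: "j < n * m" by auto
  have "(i div m = j div m \<and> i mod m = j mod m) = (i = j)"
    by (metis div_mult_mod_eq)
  then show "kron (1\<^sub>m n) (1\<^sub>m m) $$ (i, j) = 1\<^sub>m (n * m) $$ (i, j)"
    using i j div_mod_less_of_less_mult[OF i] div_mod_less_of_less_mult[OF j] by auto
qed auto

lemma kron_smult_left:
  "M \<in> carrier_mat n n \<Longrightarrow> K \<in> carrier_mat m m \<Longrightarrow> kron (c \<cdot>\<^sub>m M) K = c \<cdot>\<^sub>m kron M K"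
  using div_mod_less_of_less_mult by (intro eq_matI) auto

lemma kron_add_left:
  "M \<in> carrier_mat n n \<Longrightarrow> M' \<in> carrier_mat n n \<Longrightarrow> K \<in> carrier_mat m m \<Longrightarrow>
   kron (M + M') K = kron M K + kron M' K"
  using div_mod_less_of_less_mult by (intro eq_matI) (auto simp: algebra_simps)

lemma kron_add_right:
  "M \<in> carrier_mat n n \<Longrightarrow> K \<in> carrier_mat m m \<Longrightarrow> K' \<in> carrier_mat m m \<Longrightarrow>
   kron M (K + K') = kron M K + kron M K'"
  using div_mod_less_of_less_mult by (intro eq_matI) (auto simp: algebra_simps)

lemma kron_zero_left: "K \<in> carrier_mat m m \<Longrightarrow> kron (0\<^sub>m n n) K = 0\<^sub>m (n * m) (n * m)"
  using div_mod_less_of_less_mult by (intro eq_matI) auto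

lemma kron_zero_right: "M \<in> carrier_mat n n \<Longrightarrow> kron M (0\<^sub>m m m) = 0\<^sub>m (n * m) (n * m)"
  using div_mod_less_of_less_mult by (intro eq_matI) auto

lemma kron_anticommute_left:
  assumes "P \<in> carrier_mat n n" "P' \<in> carrier_mat n n" "Q \<in> carrier_mat m m" "Q' \<in> carrier_mat m m"
    and "P * P' + P' * P = 0\<^sub>m n n" and "Q * Q' = Q' * Q"
  shows "kron P Q * kron P' Q' + kron P' Q' * kron P Q = 0\<^sub>m (n * m) (n * m)"
proof -
  have "kron P Q * kron P' Q' + kron P' Q' * kron P Q = kron (P * P') (Q * Q') + kron (P' * P) (Q * Q')"
    using assms(1-4) by (simp add: kron_mult assms(6))
  also have "\<dots> = kron (P * P' + P' * P) (Q * Q')"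
    using assms(1-4) by (simp add: kron_add_left[where n = n and m = m])
  also have "\<dots> = 0\<^sub>m (n * m) (n * m)"
    using assms(3,4) by (simp add: assms(5) kron_zero_left)
  finally show ?thesis .
qed

lemma kron_anticommute_right:
  assumes "P \<in> carrier_mat n n" "P' \<in> carrier_mat n n" "Q \<in> carrier_mat m m" "Q' \<in> carrier_mat m m"
    and "P * P' = P' * P" and "Q * Q' + Q' * Q = 0\<^sub>m m m"
  shows "kron P Q * kron P' Q' + kron P' Q' * kron P Q = 0\<^sub>m (n * m) (n * m)"
proof -
  have "kron P Q * kron P' Q' + kron P' Q' * kron P Q = kron (P * P') (Q * Q') + kron (P * P') (Q' * Q)"
    using assms(1-4) by (simp add: kron_mult assms(5))
  also have "\<dots> = kron (P * P') (Q * Q' + Q' * Q)"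
    using assms(1-4) by (simp add: kron_add_right[where n = n and m = m])
  also have "\<dots> = 0\<^sub>m (n * m) (n * m)"
    using assms(1,2) by (simp add: assms(6) kron_zero_right)
  finally show ?thesis .
qed

section \<open>Traces and positivity\<close>

lemma mtrace_mult:
  "P \<in> carrier_mat n n \<Longrightarrow> Q \<in> carrier_mat n n \<Longrightarrow>
   mtrace (P * Q) = (\<Sum>i<n. \<Sum>j<n. P $$ (i, j) * Q $$ (j, i))"
  unfolding mtrace_def by (intro sum.cong) (auto simp: scalar_prod_def atLeast0LessThan)

lemma mtrace_mult_add:
  assumes "\<rho> \<in> carrier_mat n n" "P \<in> carrier_mat n n" "Q \<in> carrier_mat n n"
  shows "mtrace (\<rho> * (P + Q)) = mtrace (\<rho> * P) + mtrace (\<rho> * Q)"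
proof -
  have "mtrace (\<rho> * (P + Q)) = (\<Sum>i<n. \<Sum>j<n. \<rho> $$ (i, j) * (P + Q) $$ (j, i))"
    using assms by (intro mtrace_mult) auto
  then show ?thesis
    using assms by (simp add: mtrace_mult algebra_simps sum.distrib)
qed

lemma mtrace_smult: "A \<in> carrier_mat n n \<Longrightarrow> mtrace (c \<cdot>\<^sub>m A) = c * mtrace A"
  unfolding mtrace_def by (auto simp: sum_distrib_left intro: sum.cong)

lemma mtrace_mult_smult:
  "\<rho> \<in> carrier_mat n n \<Longrightarrow> P \<in> carrier_mat n n \<Longrightarrow> mtrace (\<rho> * (c \<cdot>\<^sub>m P)) = c * mtrace (\<rho> * P)"
  by (simp add: mtrace_mult sum_distrib_left mult_ac)

lemma mtrace_mult_kron:
  assumes "\<rho> \<in> carrier_mat (n * m) (n * m)" "Y \<in> carrier_mat n n" "K \<in> carrier_mat m m"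
  shows "mtrace (\<rho> * kron Y K) =
    (\<Sum>i<n * m. \<Sum>j<n * m. \<rho> $$ (i, j) * (Y $$ (j div m, i div m) * K $$ (j mod m, i mod m)))"
  using assms by (simp add: mtrace_mult kron_carrier_mat)

definition lincomb_mat :: "nat \<Rightarrow> ('i \<Rightarrow> complex) \<Rightarrow> ('i \<Rightarrow> complex mat) \<Rightarrow> 'i set \<Rightarrow> complex mat" where
  "lincomb_mat d c M I = mat d d (\<lambda>(a, b). \<Sum>s\<in>I. c s * M s $$ (a, b))"

lemma dim_lincomb_mat [simp]:
  "dim_row (lincomb_mat d c M I) = d" "dim_col (lincomb_mat d c M I) = d"
  by (simp_all add: lincomb_mat_def)

lemma lincomb_mat_carrier [simp]: "lincomb_mat d c M I \<in> carrier_mat d d"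
  by (simp add: lincomb_mat_def)

lemma index_lincomb_mat [simp]:
  "a < d \<Longrightarrow> b < d \<Longrightarrow> lincomb_mat d c M I $$ (a, b) = (\<Sum>s\<in>I. c s * M s $$ (a, b))"
  by (simp add: lincomb_mat_def)

lemma mtrace_mult_kron_lincomb:
  assumes "\<rho> \<in> carrier_mat (n * m) (n * m)" "\<And>s. s \<in> I \<Longrightarrow> M s \<in> carrier_mat n n"
    and "K \<in> carrier_mat m m"
  shows "(\<Sum>s\<in>I. c s * mtrace (\<rho> * kron (M s) K)) = mtrace (\<rho> * kron (lincomb_mat n c M I) K)"
proof -
  have "(\<Sum>s\<in>I. c s * mtrace (\<rho> * kron (M s) K)) =
    (\<Sum>i<n * m. \<Sum>j<n * m. \<rho> $$ (i, j) *
        ((\<Sum>s\<in>I. c s * M s $$ (j div m, i div m)) * K $$ (j mod m, i mod m)))"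
    using assms by (simp add: mtrace_mult_kron sum_distrib_left sum_distrib_right mult_ac sum.swap[of _ I])
  also have "\<dots> = mtrace (\<rho> * kron (lincomb_mat n c M I) K)"
    using assms div_mod_less_of_less_mult by (subst mtrace_mult_kron) (auto intro!: sum.cong)
  finally show ?thesis .
qed

lemma hermitian_matI:
  "M \<in> carrier_mat n n \<Longrightarrow> (\<And>i j. i < n \<Longrightarrow> j < n \<Longrightarrow> M $$ (i, j) = cnj (M $$ (j, i))) \<Longrightarrow>
   hermitian_mat n M"
  unfolding hermitian_mat_def by blast

text \<open>The entry identity is oriented so that it can serve as a terminating simp rule.\<close>
lemma hermitian_matD:
  assumes "hermitian_mat n M"
  shows "M \<in> carrier_mat n n" and "i < n \<Longrightarrow> j < n \<Longrightarrow> cnj (M $$ (i, j)) = M $$ (j, i)"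
  using assms unfolding hermitian_mat_def by (blast, metis complex_cnj_cnj)

lemma hermitian_mat_one: "hermitian_mat n (1\<^sub>m n)"
  by (rule hermitian_matI) auto

lemma hermitian_mat_add:
  assumes P: "hermitian_mat n P" and Q: "hermitian_mat n Q"
  shows "hermitian_mat n (P + Q)"
proof (rule hermitian_matI)
  fix i j assume "i < n" "j < n"
  with hermitian_matD(1)[OF P] hermitian_matD(1)[OF Q]
  show "(P + Q) $$ (i, j) = cnj ((P + Q) $$ (j, i))"
    by (simp add: hermitian_matD(2)[OF P] hermitian_matD(2)[OF Q])
qed (use hermitian_matD(1)[OF P] hermitian_matD(1)[OF Q] in simp)

lemma hermitian_mat_smult:
  assumes P: "hermitian_mat n P" and "c \<in> \<real>"
  shows "hermitian_mat n (c \<cdot>\<^sub>m P)"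
proof (rule hermitian_matI)
  fix i j assume "i < n" "j < n"
  with hermitian_matD(1)[OF P] assms(2)
  show "(c \<cdot>\<^sub>m P) $$ (i, j) = cnj ((c \<cdot>\<^sub>m P) $$ (j, i))"
    by (simp add: hermitian_matD(2)[OF P] Reals_cnj_iff)
qed (use hermitian_matD(1)[OF P] in simp)

lemma hermitian_mat_kron:
  assumes P: "hermitian_mat n P" and Q: "hermitian_mat m Q"
  shows "hermitian_mat (n * m) (kron P Q)"
proof (rule hermitian_matI)
  show "kron P Q \<in> carrier_mat (n * m) (n * m)"
    using hermitian_matD(1)[OF P] hermitian_matD(1)[OF Q] by (rule kron_carrier_mat)
  fix i j assume ij: "i < n * m" "j < n * m"
  have "cnj (P $$ (j div m, i div m)) = P $$ (i div m, j div m)"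
    "cnj (Q $$ (j mod m, i mod m)) = Q $$ (i mod m, j mod m)"
    using ij by (simp_all add: hermitian_matD(2)[OF P] hermitian_matD(2)[OF Q] div_mod_less_of_less_mult)
  with ij hermitian_matD(1)[OF P] hermitian_matD(1)[OF Q]
  show "kron P Q $$ (i, j) = cnj (kron P Q $$ (j, i))"
    by simp
qed

lemma hermitian_mat_mult_commuting:
  assumes P: "hermitian_mat n P" and Q: "hermitian_mat n Q" and PQ: "P * Q = Q * P"
  shows "hermitian_mat n (P * Q)"
proof (rule hermitian_matI)
  note carrier = hermitian_matD(1)[OF P] hermitian_matD(1)[OF Q]
  fix i j assume ij: "i < n" "j < n"
  have "cnj ((P * Q) $$ (j, i)) = (\<Sum>k<n. Q $$ (i, k) * P $$ (k, j))"
    using carrier ij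
    by (simp add: scalar_prod_def atLeast0LessThan cnj_sum hermitian_matD(2)[OF P]
        hermitian_matD(2)[OF Q] mult.commute)
  also have "\<dots> = (P * Q) $$ (i, j)"
    using carrier ij by (simp add: PQ scalar_prod_def atLeast0LessThan)
  finally show "(P * Q) $$ (i, j) = cnj ((P * Q) $$ (j, i))" ..
qed (use hermitian_matD(1)[OF P] hermitian_matD(1)[OF Q] in simp)

lemma hermitian_mat_lincomb:
  assumes M: "\<And>s. s \<in> I \<Longrightarrow> hermitian_mat d (M s)" and c: "\<And>s. c s \<in> \<real>"
  shows "hermitian_mat d (lincomb_mat d c M I)"
proof (rule hermitian_matI)
  fix a b assume ab: "a < d" "b < d"
  have "c s * M s $$ (a, b) = cnj (c s * M s $$ (b, a))" if "s \<in> I" for s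
    using c[of s] ab by (simp add: hermitian_matD(2)[OF M[OF that]] Reals_cnj_iff)
  then show "lincomb_mat d c M I $$ (a, b) = cnj (lincomb_mat d c M I $$ (b, a))"
    using ab by (simp add: cnj_sum)
qed simp

lemma Im_mtrace_mult_hermitian:
  assumes \<rho>: "hermitian_mat n \<rho>" and H: "hermitian_mat n H"
  shows "Im (mtrace (\<rho> * H)) = 0"
proof -
  have t: "mtrace (\<rho> * H) = (\<Sum>i<n. \<Sum>j<n. \<rho> $$ (i, j) * H $$ (j, i))"
    using hermitian_matD(1)[OF \<rho>] hermitian_matD(1)[OF H] by (rule mtrace_mult)
  have "cnj (mtrace (\<rho> * H)) = (\<Sum>i<n. \<Sum>j<n. \<rho> $$ (j, i) * H $$ (i, j))"
    unfolding t cnj_sum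
    by (intro sum.cong refl) (simp add: hermitian_matD(2)[OF \<rho>] hermitian_matD(2)[OF H])
  also have "\<dots> = mtrace (\<rho> * H)"
    unfolding t by (subst sum.swap) (simp add: mult.commute)
  finally show ?thesis
    by (metis Reals_cnj_iff complex_is_Real_iff)
qed

text \<open>With \<open>v\<^sub>k\<close> the \<open>k\<close>-th column of \<open>M\<close>, \<open>tr(\<rho> M\<^sup>2) = \<Sum>\<^sub>k v\<^sub>k\<^sup>* \<rho> v\<^sub>k\<close>.\<close>
lemma Re_mtrace_mult_square_nonneg:
  assumes \<rho>: "psd_mat n \<rho>" and M: "hermitian_mat n M"
  shows "0 \<le> Re (mtrace (\<rho> * (M * M)))"
proof -
  have \<rho>c: "\<rho> \<in> carrier_mat n n" using \<rho> unfolding psd_mat_def by (blast dest: hermitian_matD)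
  have Mc: "M \<in> carrier_mat n n" using M by (rule hermitian_matD)
  have "mtrace (\<rho> * (M * M)) = (\<Sum>i<n. \<Sum>j<n. \<Sum>k<n. \<rho> $$ (i, j) * (M $$ (j, k) * M $$ (k, i)))"
    using \<rho>c Mc by (simp add: mtrace_mult scalar_prod_def atLeast0LessThan sum_distrib_left)
  also have "\<dots> = (\<Sum>i<n. \<Sum>j<n. \<Sum>k<n. cnj (col M k $ i) * \<rho> $$ (i, j) * col M k $ j)"
    using Mc by (intro sum.cong refl) (simp add: hermitian_matD(2)[OF M] mult_ac)
  also have "\<dots> = (\<Sum>i<n. \<Sum>k<n. \<Sum>j<n. cnj (col M k $ i) * \<rho> $$ (i, j) * col M k $ j)"
    by (rule sum.cong[OF refl], rule sum.swap)
  also have "\<dots> = (\<Sum>k<n. \<Sum>i<n. \<Sum>j<n. cnj (col M k $ i) * \<rho> $$ (i, j) * col M k $ j)"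
    by (rule sum.swap)
  finally have "Re (mtrace (\<rho> * (M * M))) =
      (\<Sum>k<n. Re (\<Sum>i<n. \<Sum>j<n. cnj (col M k $ i) * \<rho> $$ (i, j) * col M k $ j))"
    by (simp add: Re_sum)
  also have "\<dots> \<ge> 0"
  proof (rule sum_nonneg)
    fix k
    have "col M k \<in> carrier_vec n" using Mc by (simp add: carrier_vecI)
    with \<rho> show "0 \<le> Re (\<Sum>i<n. \<Sum>j<n. cnj (col M k $ i) * \<rho> $$ (i, j) * col M k $ j)"
      unfolding psd_mat_def by blast
  qed
  finally show ?thesis .
qed

lemma square_add_smult_commuting:
  fixes P Q :: "'a::comm_semiring_1 mat"
  assumes P: "P \<in> carrier_mat n n" and Q: "Q \<in> carrier_mat n n" and PQ: "P * Q = Q * P"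
  shows "(P + c \<cdot>\<^sub>m Q) * (P + c \<cdot>\<^sub>m Q) = P * P + (2 * c) \<cdot>\<^sub>m (P * Q) + (c * c) \<cdot>\<^sub>m (Q * Q)"
proof -
  have cQ: "c \<cdot>\<^sub>m Q \<in> carrier_mat n n" using Q by simp
  have "(P + c \<cdot>\<^sub>m Q) * (P + c \<cdot>\<^sub>m Q) = P * (P + c \<cdot>\<^sub>m Q) + c \<cdot>\<^sub>m Q * (P + c \<cdot>\<^sub>m Q)"
    using P cQ by (intro add_mult_distrib_mat[of _ n n _ _ n]) auto
  also have "\<dots> = P * P + P * (c \<cdot>\<^sub>m Q) + (c \<cdot>\<^sub>m Q * P + c \<cdot>\<^sub>m Q * (c \<cdot>\<^sub>m Q))"
    using P cQ by (simp add: mult_add_distrib_mat[OF P P cQ] mult_add_distrib_mat[OF cQ P cQ])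
  also have "\<dots> = P * P + c \<cdot>\<^sub>m (P * Q) + (c \<cdot>\<^sub>m (P * Q) + c \<cdot>\<^sub>m (c \<cdot>\<^sub>m (Q * Q)))"
    by (simp only: mult_smult_distrib[OF P Q] mult_smult_assoc_mat[OF Q P] PQ
        mult_smult_distrib[OF cQ Q] mult_smult_assoc_mat[OF Q Q])
  also have "\<dots> = P * P + (2 * c) \<cdot>\<^sub>m (P * Q) + (c * c) \<cdot>\<^sub>m (Q * Q)"
    using P Q by (intro eq_matI) (auto simp: algebra_simps mult_2)
  finally show ?thesis .
qed

text \<open>Expand \<open>0 \<le> tr(\<rho> (P - s Q)\<^sup>2)\<close> with \<open>s = \<plusminus>t\<close> chosen against the sign of the real number
  \<open>tr(\<rho> P Q)\<close>.\<close>
lemma cmod_mtrace_commuting_le: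
  assumes \<rho>: "density_mat n \<rho>" and P: "hermitian_mat n P" and Q: "hermitian_mat n Q"
    and QQ: "Q * Q = 1\<^sub>m n" and PQ: "P * Q = Q * P"
  shows "2 * t * cmod (mtrace (\<rho> * (P * Q))) \<le> Re (mtrace (\<rho> * (P * P))) + t\<^sup>2"
proof -
  have psd: "psd_mat n \<rho>" and tr: "mtrace \<rho> = 1" using \<rho> by (simp_all add: density_mat_def)
  have \<rho>c: "\<rho> \<in> carrier_mat n n" using psd unfolding psd_mat_def by (blast dest: hermitian_matD)
  have Pc: "P \<in> carrier_mat n n" and Qc: "Q \<in> carrier_mat n n" using P Q by (simp_all add: hermitian_matD)
  define z where "z = mtrace (\<rho> * (P * Q))"
  have "Im z = 0"
    unfolding z_def using psd P Q PQ
    by (intro Im_mtrace_mult_hermitian hermitian_mat_mult_commuting) (auto simp: psd_mat_def)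
  define \<sigma> :: real where "\<sigma> = (if Re z \<ge> 0 then 1 else -1)"
  have \<sigma>: "\<sigma> * \<sigma> = 1" "\<sigma> * Re z = cmod z"
    using \<open>Im z = 0\<close> by (simp_all add: \<sigma>_def cmod_def)
  define c :: complex where "c = of_real (- t * \<sigma>)"
  have "0 \<le> Re (mtrace (\<rho> * ((P + c \<cdot>\<^sub>m Q) * (P + c \<cdot>\<^sub>m Q))))"
    using psd P Q
    by (intro Re_mtrace_mult_square_nonneg hermitian_mat_add hermitian_mat_smult) (auto simp: c_def)
  also have "mtrace (\<rho> * ((P + c \<cdot>\<^sub>m Q) * (P + c \<cdot>\<^sub>m Q))) = mtrace (\<rho> * (P * P)) + 2 * c * z + c * c"
    unfolding square_add_smult_commuting[OF Pc Qc PQ] QQ z_def using \<rho>c Pc Qc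
    by (simp add: mtrace_mult_add mtrace_mult_smult tr)
  also have "Re \<dots> = Re (mtrace (\<rho> * (P * P))) - 2 * t * (\<sigma> * Re z) + t\<^sup>2 * (\<sigma> * \<sigma>)"
    by (simp add: c_def power2_eq_square algebra_simps)
  also have "\<dots> = Re (mtrace (\<rho> * (P * P))) - 2 * t * cmod z + t\<^sup>2"
    by (simp add: \<sigma>)
  finally show ?thesis unfolding z_def by simp
qed

lemma cmod_mtrace_kron_le:
  assumes \<rho>: "density_mat (n * m) \<rho>" and X: "hermitian_mat n X" and B: "observable m B"
  shows "2 * t * cmod (mtrace (\<rho> * kron X B)) \<le> Re (mtrace (\<rho> * kron (X * X) (1\<^sub>m m))) + t\<^sup>2"
proof -
  have Xc: "X \<in> carrier_mat n n" using X by (rule hermitian_matD)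
  have hB: "hermitian_mat m B" and BB: "B * B = 1\<^sub>m m" using B by (simp_all add: observable_def)
  have Bc: "B \<in> carrier_mat m m" using hB by (rule hermitian_matD)
  let ?P = "kron X (1\<^sub>m m)" and ?Q = "kron (1\<^sub>m n) B"
  have "2 * t * cmod (mtrace (\<rho> * (?P * ?Q))) \<le> Re (mtrace (\<rho> * (?P * ?P))) + t\<^sup>2"
  proof (rule cmod_mtrace_commuting_le[OF \<rho>])
    show "hermitian_mat (n * m) ?P" "hermitian_mat (n * m) ?Q"
      using X hB by (simp_all add: hermitian_mat_kron hermitian_mat_one)
    show "?Q * ?Q = 1\<^sub>m (n * m)" "?P * ?Q = ?Q * ?P"
      using Xc Bc by (simp_all add: kron_mult BB kron_one)
  qed
  then show ?thesis
    using Xc Bc by (simp add: kron_mult)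
qed

section \<open>The upper bound\<close>

definition bit_sign :: "nat \<Rightarrow> nat set \<Rightarrow> complex" where
  "bit_sign x S = (if x \<in> S then -1 else 1)"

lemma bit_sign_square [simp]: "bit_sign x S * bit_sign x S = 1"
  by (simp add: bit_sign_def)

lemma finite_bob_strings [simp]: "finite (bob_strings N)"
  by (simp add: bob_strings_def)

lemma card_bob_strings: "card (bob_strings N) = 2 ^ (N - 1)"
  by (simp add: bob_strings_def card_Pow)

text \<open>Toggling the bit \<open>w\<close> is an involution of the strings that flips the sign of the summand.\<close>
lemma sum_bit_sign_product_toggle:
  assumes w: "w \<in> {1..<N}" and vw: "v \<noteq> w"
  shows "(\<Sum>S\<in>bob_strings N. bit_sign w S * bit_sign v S) = 0"
proof -
  define toggle where "toggle S = (if w \<in> S then S - {w} else insert w S)" for S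
  let ?f = "\<lambda>S. bit_sign w S * bit_sign v S"
  have "bij_betw toggle (bob_strings N) (bob_strings N)"
    by (rule bij_betw_byWitness[where f' = toggle]) (use w in \<open>auto simp: toggle_def bob_strings_def\<close>)
  then have "(\<Sum>S\<in>bob_strings N. ?f S) = (\<Sum>S\<in>bob_strings N. ?f (toggle S))"
    by (rule sum.reindex_bij_betw[symmetric])
  also have "\<dots> = - (\<Sum>S\<in>bob_strings N. ?f S)"
  proof -
    have "?f (toggle S) = - ?f S" for S
      using vw by (auto simp: toggle_def bit_sign_def)
    then show ?thesis by (simp add: sum_negf)
  qed
  finally show ?thesis by simp
qed

lemma sum_bit_sign_product:
  assumes "x < N" "y < N"
  shows "(\<Sum>S\<in>bob_strings N. bit_sign x S * bit_sign y S) = (if x = y then 2 ^ (N - 1) else 0)"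
proof (cases "x = y")
  case True
  then show ?thesis by (simp add: card_bob_strings)
next
  case False
  then consider "x \<in> {1..<N}" | "y \<in> {1..<N}" using assms by fastforce
  then show ?thesis
    using False sum_bit_sign_product_toggle[of x N y] sum_bit_sign_product_toggle[of y N x]
    by cases (simp_all add: mult.commute)
qed

lemma index_lincomb_mat_square:
  assumes "\<And>s. s \<in> I \<Longrightarrow> M s \<in> carrier_mat d d" "a < d" "b < d"
  shows "(lincomb_mat d c M I * lincomb_mat d c M I) $$ (a, b) =
    (\<Sum>x\<in>I. \<Sum>y\<in>I. c x * c y * (M x * M y) $$ (a, b))"
proof -
  have "(lincomb_mat d c M I * lincomb_mat d c M I) $$ (a, b) =
      (\<Sum>k<d. \<Sum>x\<in>I. \<Sum>y\<in>I. c x * c y * (M x $$ (a, k) * M y $$ (k, b)))"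
    using assms
    by (simp add: scalar_prod_def atLeast0LessThan sum_product)
      (intro sum.cong refl, simp add: mult_ac)
  also have "\<dots> = (\<Sum>x\<in>I. \<Sum>y\<in>I. \<Sum>k<d. c x * c y * (M x $$ (a, k) * M y $$ (k, b)))"
    by (simp add: sum.swap[of _ "{..<d}"])
  also have "\<dots> = (\<Sum>x\<in>I. \<Sum>y\<in>I. c x * c y * (M x * M y) $$ (a, b))"
  proof (intro sum.cong refl)
    fix x y assume "x \<in> I" "y \<in> I"
    with assms have "M x \<in> carrier_mat d d" "M y \<in> carrier_mat d d" by auto
    with assms(2,3) show "(\<Sum>k<d. c x * c y * (M x $$ (a, k) * M y $$ (k, b))) = c x * c y * (M x * M y) $$ (a, b)"
      by (simp add: scalar_prod_def atLeast0LessThan sum_distrib_left)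
  qed
  finally show ?thesis .
qed

definition signed_sum_mat :: "nat \<Rightarrow> nat \<Rightarrow> (nat \<Rightarrow> complex mat) \<Rightarrow> nat set \<Rightarrow> complex mat" where
  "signed_sum_mat N d A S = lincomb_mat d (\<lambda>x. bit_sign x S) A {..<N}"

lemma sum_signed_sum_mat_square:
  assumes A: "\<And>x. x < N \<Longrightarrow> A x \<in> carrier_mat d d" and AA: "\<And>x. x < N \<Longrightarrow> A x * A x = 1\<^sub>m d"
  shows "lincomb_mat d (\<lambda>_. 1) (\<lambda>S. signed_sum_mat N d A S * signed_sum_mat N d A S) (bob_strings N) =
    of_nat (2 ^ (N - 1) * N) \<cdot>\<^sub>m 1\<^sub>m d"
proof (rule eq_matI)
  fix a b assume "a < dim_row (of_nat (2 ^ (N - 1) * N) \<cdot>\<^sub>m 1\<^sub>m d :: complex mat)"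
    "b < dim_col (of_nat (2 ^ (N - 1) * N) \<cdot>\<^sub>m 1\<^sub>m d :: complex mat)"
  then have ab: "a < d" "b < d" by simp_all
  let ?s = "\<lambda>x y. (\<Sum>S\<in>bob_strings N. bit_sign x S * bit_sign y S)"
  have "(\<Sum>S\<in>bob_strings N. (signed_sum_mat N d A S * signed_sum_mat N d A S) $$ (a, b)) =
      (\<Sum>S\<in>bob_strings N. \<Sum>x<N. \<Sum>y<N. bit_sign x S * bit_sign y S * (A x * A y) $$ (a, b))"
    unfolding signed_sum_mat_def using A ab by (intro sum.cong refl index_lincomb_mat_square) auto
  also have "\<dots> = (\<Sum>x<N. \<Sum>y<N. ?s x y * (A x * A y) $$ (a, b))"
    by (simp add: sum.swap[of _ "bob_strings N"] sum_distrib_right)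
  also have "\<dots> = (\<Sum>x<N. \<Sum>y<N. if x = y then 2 ^ (N - 1) * (A x * A y) $$ (a, b) else 0)"
    by (intro sum.cong refl) (simp add: sum_bit_sign_product)
  also have "\<dots> = (\<Sum>x<N. 2 ^ (N - 1) * (A x * A x) $$ (a, b))"
    by (simp add: sum.delta)
  also have "\<dots> = (of_nat (2 ^ (N - 1) * N) \<cdot>\<^sub>m 1\<^sub>m d) $$ (a, b)"
    using ab by (simp add: AA)
  finally show "lincomb_mat d (\<lambda>_. 1) (\<lambda>S. signed_sum_mat N d A S * signed_sum_mat N d A S) (bob_strings N) $$ (a, b) =
      (of_nat (2 ^ (N - 1) * N) \<cdot>\<^sub>m 1\<^sub>m d) $$ (a, b)"
    using ab by simp
qed simp_all

lemma mtrace_kron_signed_sum_mat: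
  assumes "\<rho> \<in> carrier_mat (n * m) (n * m)" "\<And>x. x < N \<Longrightarrow> A x \<in> carrier_mat n n"
    and "K \<in> carrier_mat m m"
  shows "(\<Sum>x<N. (if x \<in> S then -1 else 1) * mtrace (\<rho> * kron (A x) K)) =
    mtrace (\<rho> * kron (signed_sum_mat N n A S) K)"
  using mtrace_mult_kron_lincomb[of \<rho> n m "{..<N}" A K "\<lambda>x. bit_sign x S"] assms
  by (simp add: signed_sum_mat_def bit_sign_def)

lemma sum_cmod_correlations_le:
  assumes valid: "valid_setup N dA dB \<rho> A B" and N: "N \<ge> 1"
  shows "(\<Sum>S\<in>bob_strings N. cmod (\<Sum>x<N. (if x \<in> S then -1 else 1) * mtrace (\<rho> * kron (A x) (B S))))
    \<le> 2 ^ (N - 1) * sqrt N"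
proof -
  have \<rho>: "density_mat (dA * dB) \<rho>" and obsA: "\<And>x. x < N \<Longrightarrow> observable dA (A x)"
    and obsB: "\<And>S. S \<in> bob_strings N \<Longrightarrow> observable dB (B S)"
    using valid by (auto simp: valid_setup_def)
  have \<rho>c: "\<rho> \<in> carrier_mat (dA * dB) (dA * dB)" and tr: "mtrace \<rho> = 1"
    using \<rho> unfolding density_mat_def psd_mat_def by (blast dest: hermitian_matD)+
  have hA: "\<And>x. x < N \<Longrightarrow> hermitian_mat dA (A x)" and AA: "\<And>x. x < N \<Longrightarrow> A x * A x = 1\<^sub>m dA"
    using obsA by (simp_all add: observable_def)
  have Ac: "\<And>x. x < N \<Longrightarrow> A x \<in> carrier_mat dA dA" using hA by (simp add: hermitian_matD)
  have Bc: "\<And>S. S \<in> bob_strings N \<Longrightarrow> B S \<in> carrier_mat dB dB"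
    using obsB by (simp add: observable_def hermitian_matD)
  define t where "t = sqrt N"
  have t: "t > 0" "t\<^sup>2 = N" using N by (simp_all add: t_def)
  let ?X = "signed_sum_mat N dA A"
  let ?z = "\<lambda>S. \<Sum>x<N. (if x \<in> S then -1 else 1) * mtrace (\<rho> * kron (A x) (B S))"
  let ?R = "\<lambda>S. Re (mtrace (\<rho> * kron (?X S * ?X S) (1\<^sub>m dB)))"
  have each: "2 * t * cmod (?z S) \<le> ?R S + t\<^sup>2" if S: "S \<in> bob_strings N" for S
  proof -
    have "hermitian_mat dA (?X S)"
      unfolding signed_sum_mat_def using hA by (intro hermitian_mat_lincomb) (auto simp: bit_sign_def)
    then show ?thesis
      using cmod_mtrace_kron_le[OF \<rho> _ obsB[OF S]] mtrace_kron_signed_sum_mat[OF \<rho>c Ac Bc[OF S]] by simp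
  qed
  have "(\<Sum>S\<in>bob_strings N. ?R S) = Re (\<Sum>S\<in>bob_strings N. 1 * mtrace (\<rho> * kron (?X S * ?X S) (1\<^sub>m dB)))"
    by (simp add: Re_sum)
  also have "(\<Sum>S\<in>bob_strings N. 1 * mtrace (\<rho> * kron (?X S * ?X S) (1\<^sub>m dB))) =
      mtrace (\<rho> * kron (lincomb_mat dA (\<lambda>_. 1) (\<lambda>S. ?X S * ?X S) (bob_strings N)) (1\<^sub>m dB))"
    by (rule mtrace_mult_kron_lincomb[OF \<rho>c]) (auto simp: signed_sum_mat_def intro: mult_carrier_mat)
  also have "lincomb_mat dA (\<lambda>_. 1) (\<lambda>S. ?X S * ?X S) (bob_strings N) = of_nat (2 ^ (N - 1) * N) \<cdot>\<^sub>m 1\<^sub>m dA"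
    by (rule sum_signed_sum_mat_square[OF Ac AA])
  also have "Re (mtrace (\<rho> * kron (of_nat (2 ^ (N - 1) * N) \<cdot>\<^sub>m 1\<^sub>m dA) (1\<^sub>m dB))) = 2 ^ (N - 1) * N"
    using \<rho>c by (simp add: kron_smult_left[of _ dA _ dB] kron_one mtrace_mult_smult tr)
  finally have sumR: "(\<Sum>S\<in>bob_strings N. ?R S) = 2 ^ (N - 1) * N" .
  have "2 * t * (\<Sum>S\<in>bob_strings N. cmod (?z S)) \<le> (\<Sum>S\<in>bob_strings N. ?R S + t\<^sup>2)"
    unfolding sum_distrib_left by (rule sum_mono) (rule each)
  also have "\<dots> = 2 * t * (2 ^ (N - 1) * t)"
    using t by (simp add: sum.distrib sumR card_bob_strings power2_eq_square algebra_simps)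
  finally show ?thesis
    using t by (simp add: t_def)
qed

section \<open>Attaining the bound\<close>

lemma sum_sum_symmetric:
  fixes f :: "'i \<Rightarrow> 'i \<Rightarrow> 'a::field_char_0"
  assumes "finite I" and "\<And>x y. x \<in> I \<Longrightarrow> y \<in> I \<Longrightarrow> f x y + f y x = (if x = y then 2 * g x else 0)"
  shows "(\<Sum>x\<in>I. \<Sum>y\<in>I. f x y) = (\<Sum>x\<in>I. g x)"
proof -
  have "2 * (\<Sum>x\<in>I. \<Sum>y\<in>I. f x y) = (\<Sum>x\<in>I. \<Sum>y\<in>I. f x y + f y x)"
    by (simp add: sum.distrib sum.swap[of f I I])
  also have "\<dots> = (\<Sum>x\<in>I. \<Sum>y\<in>I. if x = y then 2 * g x else 0)"
    using assms(2) by (intro sum.cong refl) auto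
  also have "\<dots> = 2 * (\<Sum>x\<in>I. g x)"
    using assms(1) by (simp add: sum.delta sum_distrib_left)
  finally show ?thesis by simp
qed

lemma lincomb_mat_square_clifford:
  assumes "finite I" and M: "\<And>s. s \<in> I \<Longrightarrow> M s \<in> carrier_mat d d"
    and clifford: "\<And>x y. x \<in> I \<Longrightarrow> y \<in> I \<Longrightarrow>
      M x * M y + M y * M x = (if x = y then 2 \<cdot>\<^sub>m 1\<^sub>m d else 0\<^sub>m d d)"
  shows "lincomb_mat d c M I * lincomb_mat d c M I = (\<Sum>x\<in>I. c x * c x) \<cdot>\<^sub>m 1\<^sub>m d"
proof (rule eq_matI)
  fix a b assume "a < dim_row ((\<Sum>x\<in>I. c x * c x) \<cdot>\<^sub>m 1\<^sub>m d)" "b < dim_col ((\<Sum>x\<in>I. c x * c x) \<cdot>\<^sub>m 1\<^sub>m d)"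
  then have ab: "a < d" "b < d" by simp_all
  have "(lincomb_mat d c M I * lincomb_mat d c M I) $$ (a, b) =
      (\<Sum>x\<in>I. \<Sum>y\<in>I. c x * c y * (M x * M y) $$ (a, b))"
    using M ab by (rule index_lincomb_mat_square)
  also have "\<dots> = (\<Sum>x\<in>I. c x * c x * (if a = b then 1 else 0))"
  proof (rule sum_sum_symmetric[OF \<open>finite I\<close>])
    fix x y assume xy: "x \<in> I" "y \<in> I"
    have "c x * c y * (M x * M y) $$ (a, b) + c y * c x * (M y * M x) $$ (a, b) =
        c x * c y * (M x * M y + M y * M x) $$ (a, b)"
      using M[OF xy(1)] M[OF xy(2)] ab by (simp add: algebra_simps)
    then show "c x * c y * (M x * M y) $$ (a, b) + c y * c x * (M y * M x) $$ (a, b) =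
        (if x = y then 2 * (c x * c x * (if a = b then 1 else 0)) else 0)"
      using clifford[OF xy] ab by (auto simp: mult_ac)
  qed
  also have "\<dots> = ((\<Sum>x\<in>I. c x * c x) \<cdot>\<^sub>m 1\<^sub>m d) $$ (a, b)"
    using ab by (simp add: sum_distrib_right)
  finally show "(lincomb_mat d c M I * lincomb_mat d c M I) $$ (a, b) = ((\<Sum>x\<in>I. c x * c x) \<cdot>\<^sub>m 1\<^sub>m d) $$ (a, b)" .
qed simp_all

definition pauli_x :: "complex mat" where
  "pauli_x = mat 2 2 (\<lambda>(i, j). if i = j then 0 else 1)"

definition pauli_z :: "complex mat" where
  "pauli_z = mat 2 2 (\<lambda>(i, j). if i = j then (if i = 0 then 1 else -1) else 0)"

lemma pauli_carrier: "pauli_x \<in> carrier_mat 2 2" "pauli_z \<in> carrier_mat 2 2"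
  by (simp_all add: pauli_x_def pauli_z_def)

lemma pauli_hermitian: "hermitian_mat 2 pauli_x" "hermitian_mat 2 pauli_z"
  by (auto intro!: hermitian_matI simp: pauli_x_def pauli_z_def less_2_cases_iff)

lemma pauli_transpose: "transpose_mat pauli_x = pauli_x" "transpose_mat pauli_z = pauli_z"
  by (auto intro!: eq_matI simp: pauli_x_def pauli_z_def)

lemma pauli_square: "pauli_x * pauli_x = 1\<^sub>m 2" "pauli_z * pauli_z = 1\<^sub>m 2"
  by (auto intro!: eq_matI simp: pauli_x_def pauli_z_def scalar_prod_def less_2_cases_iff numeral_2_eq_2)

lemma pauli_anticommute: "pauli_z * pauli_x + pauli_x * pauli_z = 0\<^sub>m 2 2"
  by (auto intro!: eq_matI simp: pauli_x_def pauli_z_def scalar_prod_def less_2_cases_iff numeral_2_eq_2)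

lemma transpose_kron: "transpose_mat (kron P Q) = kron (transpose_mat P) (transpose_mat Q)"
  by (rule eq_matI) (auto simp: div_mod_less_of_less_mult)

text \<open>For \<open>i < k\<close>, \<open>jordan_wigner k i = Z \<otimes> \<dots> \<otimes> Z \<otimes> X \<otimes> 1 \<otimes> \<dots> \<otimes> 1\<close> with \<open>k - 1 - i\<close> factors \<open>Z\<close>
  and \<open>i\<close> factors \<open>1\<close>.\<close>
fun jordan_wigner :: "nat \<Rightarrow> nat \<Rightarrow> complex mat" where
  "jordan_wigner 0 i = 1\<^sub>m 1"
| "jordan_wigner (Suc k) i =
    (if i < k then kron pauli_z (jordan_wigner k i) else kron pauli_x (1\<^sub>m (2 ^ k)))"

lemma jordan_wigner_carrier: "jordan_wigner k i \<in> carrier_mat (2 ^ k) (2 ^ k)"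
  by (induction k) (auto intro: kron_carrier_mat pauli_carrier)

lemma jordan_wigner_hermitian: "hermitian_mat (2 ^ k) (jordan_wigner k i)"
  by (induction k) (auto intro: hermitian_mat_kron pauli_hermitian hermitian_mat_one)

lemma jordan_wigner_transpose: "transpose_mat (jordan_wigner k i) = jordan_wigner k i"
  by (induction k) (auto simp: transpose_kron pauli_transpose)

lemma jordan_wigner_square: "jordan_wigner k i * jordan_wigner k i = 1\<^sub>m (2 ^ k)"
proof (induction k)
  case (Suc k)
  then show ?case
    using pauli_carrier jordan_wigner_carrier[of k i]
    by (simp add: kron_mult pauli_square kron_one)
qed simp

lemma jordan_wigner_anticommute:
  "i < k \<Longrightarrow> j < k \<Longrightarrow> i \<noteq> j \<Longrightarrow>
   jordan_wigner k i * jordan_wigner k j + jordan_wigner k j * jordan_wigner k i = 0\<^sub>m (2 ^ k) (2 ^ k)"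
proof (induction k arbitrary: i j)
  case (Suc k)
  have zx: "kron pauli_z (jordan_wigner k l) * kron pauli_x (1\<^sub>m (2 ^ k)) +
      kron pauli_x (1\<^sub>m (2 ^ k)) * kron pauli_z (jordan_wigner k l) = 0\<^sub>m (2 ^ Suc k) (2 ^ Suc k)" for l
    using kron_anticommute_left[OF pauli_carrier(2,1) jordan_wigner_carrier one_carrier_mat
        pauli_anticommute] jordan_wigner_carrier[of k l] by simp
  consider "i < k" "j < k" | "i = k" "j < k" | "i < k" "j = k"
    using Suc.prems by fastforce
  then show ?case
  proof cases
    case 1
    then show ?thesis
      using kron_anticommute_right[OF pauli_carrier(2) pauli_carrier(2) jordan_wigner_carrier
          jordan_wigner_carrier refl Suc.IH[OF 1 Suc.prems(3)]] by simp
  next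
    case 2
    let ?XI = "kron pauli_x (1\<^sub>m (2 ^ k))" and ?ZJ = "kron pauli_z (jordan_wigner k j)"
    have "?XI * ?ZJ \<in> carrier_mat (2 ^ Suc k) (2 ^ Suc k)" "?ZJ * ?XI \<in> carrier_mat (2 ^ Suc k) (2 ^ Suc k)"
      using kron_carrier_mat[OF pauli_carrier(1) one_carrier_mat[of "2 ^ k"]]
        kron_carrier_mat[OF pauli_carrier(2) jordan_wigner_carrier[of k j]] by auto
    with 2 zx[of j] show ?thesis by (simp add: comm_add_mat)
  next
    case 3
    then show ?thesis using zx[of i] by simp
  qed
qed simp

lemma jordan_wigner_clifford:
  assumes "i < k" "j < k"
  shows "jordan_wigner k i * jordan_wigner k j + jordan_wigner k j * jordan_wigner k i =
    (if i = j then 2 \<cdot>\<^sub>m 1\<^sub>m (2 ^ k) else 0\<^sub>m (2 ^ k) (2 ^ k))"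
proof (cases "i = j")
  case True
  have "1\<^sub>m (2 ^ k) + 1\<^sub>m (2 ^ k) = (2 \<cdot>\<^sub>m 1\<^sub>m (2 ^ k) :: complex mat)"
    by (rule eq_matI) auto
  with True show ?thesis by (simp add: jordan_wigner_square)
qed (simp add: assms jordan_wigner_anticommute)

lemma sum_diagonal_index:
  fixes g :: "nat \<Rightarrow> 'a::comm_monoid_add"
  shows "(\<Sum>i<d * d. if i div d = i mod d then g i else 0) = (\<Sum>a<d. g (a * d + a))"
  using sum_lessThan_mult_div_mod[of "\<lambda>a b. if a = b then g (a * d + b) else 0" d d,
      unfolded div_mult_mod_eq]
  by (simp add: sum.delta)

text \<open>The projector onto \<open>d\<^sup>-\<^sup>1\<^sup>/\<^sup>2 \<Sum>\<^sub>a |a\<rangle> \<otimes> |a\<rangle>\<close>; the product basis vector \<open>|a\<rangle> \<otimes> |b\<rangle>\<close> has index \<open>a d + b\<close>.\<close>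
definition max_entangled :: "nat \<Rightarrow> complex mat" where
  "max_entangled d = mat (d * d) (d * d)
     (\<lambda>(i, j). if i div d = i mod d \<and> j div d = j mod d then 1 / of_nat d else 0)"

lemma max_entangled_density:
  assumes "d > 0"
  shows "density_mat (d * d) (max_entangled d)"
proof -
  let ?\<phi> = "\<lambda>i. if i div d = i mod d then (1::complex) else 0"
  have entry: "max_entangled d $$ (i, j) = ?\<phi> i * ?\<phi> j / of_nat d" if "i < d * d" "j < d * d" for i j
    using that by (simp add: max_entangled_def)
  have "hermitian_mat (d * d) (max_entangled d)"
    by (rule hermitian_matI) (auto simp: max_entangled_def)
  moreover have "0 \<le> Re (\<Sum>i<d * d. \<Sum>j<d * d. cnj (v $ i) * max_entangled d $$ (i, j) * v $ j)" for v
  proof -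
    define w where "w = (\<Sum>j<d * d. ?\<phi> j * v $ j)"
    have "(\<Sum>i<d * d. \<Sum>j<d * d. cnj (v $ i) * max_entangled d $$ (i, j) * v $ j) =
        (\<Sum>i<d * d. \<Sum>j<d * d. (?\<phi> i * cnj (v $ i)) * (?\<phi> j * v $ j) / of_nat d)"
      by (intro sum.cong refl) (simp add: entry)
    also have "\<dots> = (\<Sum>i<d * d. ?\<phi> i * cnj (v $ i)) * w / of_nat d"
      by (simp add: w_def sum_product sum_divide_distrib)
    also have "(\<Sum>i<d * d. ?\<phi> i * cnj (v $ i)) = cnj w"
    proof -
      have "cnj (?\<phi> i) = ?\<phi> i" for i by simp
      then show ?thesis by (simp add: w_def cnj_sum)
    qed
    also have "cnj w * w / of_nat d = of_real ((cmod w)\<^sup>2 / real d)"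
      using complex_norm_square[of w] by (simp add: mult.commute)
    finally show ?thesis by simp
  qed
  moreover have "mtrace (max_entangled d) = 1"
    using assms by (simp add: mtrace_def max_entangled_def sum_diagonal_index)
  ultimately show ?thesis
    by (simp add: density_mat_def psd_mat_def)
qed

lemma mtrace_max_entangled_kron:
  assumes X: "X \<in> carrier_mat d d" and Y: "Y \<in> carrier_mat d d"
  shows "mtrace (max_entangled d * kron X Y) = mtrace (transpose_mat X * Y) / of_nat d"
proof -
  have \<rho>: "max_entangled d \<in> carrier_mat (d * d) (d * d)"
    by (simp add: max_entangled_def)
  have "mtrace (max_entangled d * kron X Y) =
      (\<Sum>i<d * d. \<Sum>j<d * d. max_entangled d $$ (i, j) * kron X Y $$ (j, i))"
    by (rule mtrace_mult[OF \<rho> kron_carrier_mat[OF X Y]])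
  also have "\<dots> = (\<Sum>i<d * d. if i div d = i mod d then
         (\<Sum>j<d * d. if j div d = j mod d then kron X Y $$ (j, i) / of_nat d else 0) else 0)"
    by (intro sum.cong refl) (auto simp: max_entangled_def intro!: sum.cong)
  also have "\<dots> = (\<Sum>a<d. \<Sum>a'<d. kron X Y $$ (a' * d + a', a * d + a) / of_nat d)"
    by (simp add: sum_diagonal_index)
  also have "\<dots> = (\<Sum>a<d. \<Sum>a'<d. X $$ (a', a) * Y $$ (a', a) / of_nat d)"
  proof (intro sum.cong refl)
    fix a a' assume "a \<in> {..<d}" "a' \<in> {..<d}"
    then have "a * d + a < d * d" "a' * d + a' < d * d"
      using mult_le_mono1[of "Suc a" d d] mult_le_mono1[of "Suc a'" d d] by auto
    with X Y \<open>a \<in> {..<d}\<close> \<open>a' \<in> {..<d}\<close>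
    show "kron X Y $$ (a' * d + a', a * d + a) / of_nat d = X $$ (a', a) * Y $$ (a', a) / of_nat d"
      by simp
  qed
  also have "\<dots> = mtrace (transpose_mat X * Y) / of_nat d"
    using X Y by (simp add: mtrace_def scalar_prod_def atLeast0LessThan sum_divide_distrib)
  finally show ?thesis .
qed

lemma transpose_lincomb_mat:
  assumes "\<And>s. s \<in> I \<Longrightarrow> M s \<in> carrier_mat d d" "\<And>s. s \<in> I \<Longrightarrow> transpose_mat (M s) = M s"
  shows "transpose_mat (lincomb_mat d c M I) = lincomb_mat d c M I"
proof (rule eq_matI)
  fix a b assume "a < dim_row (lincomb_mat d c M I)" "b < dim_col (lincomb_mat d c M I)"
  then have ab: "a < d" "b < d" by simp_all
  have "M s $$ (b, a) = M s $$ (a, b)" if "s \<in> I" for s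
    using assms[OF that] ab by (metis carrier_matD index_transpose_mat(1))
  with ab show "transpose_mat (lincomb_mat d c M I) $$ (a, b) = lincomb_mat d c M I $$ (a, b)"
    by (simp cong: sum.cong)
qed simp_all

lemma BN_Q_attained:
  assumes N: "N \<ge> 1"
  shows "\<exists>dA dB \<rho> A B. valid_setup N dA dB \<rho> A B \<and>
    (\<forall>x<N. \<forall>x'<N. A x * A x' + A x' * A x = (if x = x' then 2 \<cdot>\<^sub>m 1\<^sub>m dA else 0\<^sub>m dA dA)) \<and>
    BN_Q N \<eta> \<rho> A B = \<eta> * 2 ^ (N - 1) * sqrt N"
proof -
  define d :: nat where "d = 2 ^ N"
  define A where "A = jordan_wigner N"
  define X where "X = signed_sum_mat N d A"
  define c :: complex where "c = of_real (1 / sqrt N)"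
  define B where "B S = c \<cdot>\<^sub>m X S" for S
  have Ac: "\<And>x. A x \<in> carrier_mat d d" and hA: "\<And>x. hermitian_mat d (A x)"
    unfolding A_def d_def by (simp_all add: jordan_wigner_carrier jordan_wigner_hermitian)
  have clifford: "\<forall>x<N. \<forall>x'<N. A x * A x' + A x' * A x = (if x = x' then 2 \<cdot>\<^sub>m 1\<^sub>m d else 0\<^sub>m d d)"
    unfolding A_def d_def by (simp add: jordan_wigner_clifford)
  have Xc: "X S \<in> carrier_mat d d" for S by (simp add: X_def signed_sum_mat_def)
  have XX: "X S * X S = of_nat N \<cdot>\<^sub>m 1\<^sub>m d" for S
    unfolding X_def signed_sum_mat_def using Ac clifford
    by (subst lincomb_mat_square_clifford) auto
  have hX: "hermitian_mat d (X S)" for S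
    unfolding X_def signed_sum_mat_def using hA
    by (intro hermitian_mat_lincomb) (auto simp: bit_sign_def)
  have X_transpose: "transpose_mat (X S) = X S" for S
    unfolding X_def signed_sum_mat_def A_def d_def
    by (intro transpose_lincomb_mat jordan_wigner_carrier jordan_wigner_transpose)
  have cc: "c * c * of_nat N = 1" unfolding c_def using N by (simp flip: of_real_mult)
  have obsB: "observable d (B S)" for S
  proof -
    have "B S * B S = c \<cdot>\<^sub>m (X S * (c \<cdot>\<^sub>m X S))"
      unfolding B_def by (rule mult_smult_assoc_mat[OF Xc smult_carrier_mat[OF Xc]])
    also have "\<dots> = c \<cdot>\<^sub>m (c \<cdot>\<^sub>m (X S * X S))"
      by (simp add: mult_smult_distrib[OF Xc Xc])
    also have "\<dots> = 1\<^sub>m d" using cc by (intro eq_matI) (auto simp: XX mult.assoc)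
    finally show ?thesis
      unfolding observable_def B_def using hX by (simp add: hermitian_mat_smult c_def)
  qed
  have valid: "valid_setup N d d (max_entangled d) A B"
    using max_entangled_density[of d] hA obsB by (simp add: valid_setup_def observable_def d_def
        A_def jordan_wigner_square)
  have correlation: "(\<Sum>x<N. (if x \<in> S then -1 else 1) * mtrace (max_entangled d * kron (A x) (B S))) = sqrt N"
    for S
  proof -
    have \<rho>c: "max_entangled d \<in> carrier_mat (d * d) (d * d)" by (simp add: max_entangled_def)
    have Bc: "B S \<in> carrier_mat d d" using Xc by (simp add: B_def)
    have "(\<Sum>x<N. (if x \<in> S then -1 else 1) * mtrace (max_entangled d * kron (A x) (B S))) =
        mtrace (max_entangled d * kron (X S) (B S))"
      unfolding X_def using Ac by (rule mtrace_kron_signed_sum_mat[OF \<rho>c _ Bc])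
    also have "\<dots> = mtrace (transpose_mat (X S) * B S) / of_nat d"
      by (rule mtrace_max_entangled_kron[OF Xc Bc])
    also have "\<dots> = c * of_nat N"
      using Xc by (simp add: X_transpose B_def mult_smult_distrib[OF Xc Xc] XX mtrace_smult mtrace_def d_def)
    also have "\<dots> = sqrt N"
      unfolding c_def by (metis mult_1 of_real_divide of_real_mult of_real_of_nat_eq of_nat_0_le_iff
          real_div_sqrt times_divide_eq_left)
    finally show ?thesis .
  qed
  have "BN_Q N \<eta> (max_entangled d) A B = \<eta> * 2 ^ (N - 1) * sqrt N"
    by (simp add: BN_Q_def correlation card_bob_strings)
  with valid clifford show ?thesis by blast
qed

lemma BN_Q_le:
  assumes "valid_setup N dA dB \<rho> A B" "N \<ge> 1" "0 \<le> \<eta>"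
  shows "BN_Q N \<eta> \<rho> A B \<le> \<eta> * 2 ^ (N - 1) * sqrt N"
  using mult_left_mono[OF sum_cmod_correlations_le[OF assms(1,2)] assms(3)]
  by (simp add: BN_Q_def mult.assoc)

theorem mainTheorem5:
  fixes N :: nat and \<eta> :: real
  assumes "N \<ge> 1" and "0 \<le> \<eta>" and "\<eta> \<le> 1"
  shows "Sup {BN_Q N \<eta> \<rho> A B | dA dB \<rho> A B. valid_setup N dA dB \<rho> A B}
           = \<eta> * 2 ^ (N - 1) * sqrt N
       \<and> (\<exists>dA dB \<rho> A B. valid_setup N dA dB \<rho> A B \<and>
           (\<forall>x<N. \<forall>x'<N. A x * A x' + A x' * A x =
               (if x = x' then 2 \<cdot>\<^sub>m 1\<^sub>m dA else 0\<^sub>m dA dA)) \<and>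
           BN_Q N \<eta> \<rho> A B = \<eta> * 2 ^ (N - 1) * sqrt N)"
proof -
  let ?V = "{BN_Q N \<eta> \<rho> A B | dA dB \<rho> A B. valid_setup N dA dB \<rho> A B}"
  have attained: "\<exists>dA dB \<rho> A B. valid_setup N dA dB \<rho> A B \<and>
      (\<forall>x<N. \<forall>x'<N. A x * A x' + A x' * A x = (if x = x' then 2 \<cdot>\<^sub>m 1\<^sub>m dA else 0\<^sub>m dA dA)) \<and>
      BN_Q N \<eta> \<rho> A B = \<eta> * 2 ^ (N - 1) * sqrt N"
    using BN_Q_attained[OF assms(1)] .
  then have "\<eta> * 2 ^ (N - 1) * sqrt N \<in> ?V" by fastforce
  moreover have "v \<le> \<eta> * 2 ^ (N - 1) * sqrt N" if "v \<in> ?V" for v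
    using that BN_Q_le assms(1,2) by blast
  ultimately have "Sup ?V = \<eta> * 2 ^ (N - 1) * sqrt N"
    by (rule cSup_eq_maximum)
  with attained show ?thesis by blast
qed

end
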